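(* Let $\mathsf{Pos}(n)$ be the open cone of $n\times n$ real symmetric positive definite matrices in the space of symmetric matrices. Then $r(\mathsf{Pos}(n))=n$.
   Context: For an open acute convex cone $c$ in a finite-dimensional real vector space, its rank $r(c)$ is the infimum of positive integers $N$ with the property: whenever $v_0,v_1,\dots,v_N\in\overline c-\{0\}$ satisfy $\sum_{i=0}^Nv_i\in c$, there is an index $0\le j\le N$ with $\sum_{0\le i\le N,\,i\ne j}v_i\in c$. Here $\overline{\mathsf{Pos}(n)}$ is the cone of positive semidefinite matrices. *)

theory Defs
  imports "HOL-Analysis.Analysis" "HOL-Library.Extended_Nat"
begin

definition cone_rank_prop :: "'a::real_normed_vector set \<Rightarrow> nat \<Rightarrow> bool" where
  "cone_rank_prop c N \<longleftrightarrow>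
     (\<forall>v :: nat \<Rightarrow> 'a.
        (\<forall>i\<le>N. v i \<in> closure c - {0}) \<longrightarrow> (\<Sum>i\<le>N. v i) \<in> c \<longrightarrow>
        (\<exists>j\<le>N. (\<Sum>i\<in>{..N} - {j}. v i) \<in> c))"

definition cone_rank :: "'a::real_normed_vector set \<Rightarrow> enat" where
  "cone_rank c = (INF N \<in> {N::nat. 0 < N \<and> cone_rank_prop c N}. enat N)"

text \<open>Open cone of real symmetric positive definite matrices; all its elements are symmetric,
so it lives in the subspace of symmetric matrices (which is closed in the matrix space).\<close>
definition Pos :: "(real^'n^'n) set" where
  "Pos = {A. transpose A = A \<and> (\<forall>x::real^'n. x \<noteq> 0 \<longrightarrow> 0 < x \<bullet> (A *v x))}"

end

theory Submission
  imports Defs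
begin

text \<open>The closure of \<open>Pos(n)\<close> is the cone of positive semidefinite matrices.
If \<open>v\<^sub>0, \<dots>, v\<^sub>N\<close> are positive semidefinite with positive definite sum but no
partial sum omitting one \<open>v\<^sub>j\<close> is positive definite, pick \<open>x\<^sub>j \<noteq> 0\<close> in the kernel of
that partial sum. Then \<open>x\<^sub>j\<close> lies in the kernel of every \<open>v\<^sub>i\<close> with \<open>i \<noteq> j\<close> but not in
that of \<open>v\<^sub>j\<close>, so \<open>x\<^sub>0, \<dots>, x\<^sub>N\<close> are linearly independent and \<open>N + 1 \<le> n\<close>.
Conversely, for \<open>N < n\<close> split the coordinates into \<open>N + 1\<close> nonempty classes and let
\<open>v\<^sub>i\<close> be the diagonal projection onto the \<open>i\<close>-th class: the sum of all of them is the
identity, but omitting any one leaves a singular matrix.\<close>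

lemma cone_rank_eqI:
  assumes "0 < n" and "\<And>N. cone_rank_prop c N \<longleftrightarrow> n \<le> N"
  shows "cone_rank c = enat n"
proof -
  have "{N. 0 < N \<and> cone_rank_prop c N} = {n..}" using assms by auto
  then show ?thesis unfolding cone_rank_def
    by (intro antisym INF_lower INF_greatest) auto
qed

lemma linear_coeff_eq_0_if_quadratic_nonneg:
  fixes a c :: real
  assumes "\<And>t. 0 \<le> 2 * t * a + t\<^sup>2 * c" and "0 \<le> c"
  shows "a = 0"
proof -
  define t where "t = - a / (c + 1)"
  have t: "t * (c + 1) = - a" using assms(2) by (simp add: t_def)
  have "0 \<le> (2 * t * a + t\<^sup>2 * c) * (c + 1)\<^sup>2" using assms by simp
  also have "\<dots> = 2 * a * (c + 1) * (t * (c + 1)) + c * (t * (c + 1))\<^sup>2"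
    by (simp add: power2_eq_square algebra_simps)
  also have "\<dots> = - a\<^sup>2 * (c + 2)" unfolding t by (simp add: power2_eq_square algebra_simps)
  finally have "a\<^sup>2 * (c + 2) \<le> 0" by simp
  then have "a\<^sup>2 \<le> 0" using assms(2) by (simp add: mult_le_0_iff)
  then show ?thesis by simp
qed

lemma card_le_DIM_if_separated_by_linear_maps:
  fixes f :: "'i \<Rightarrow> 'a::euclidean_space \<Rightarrow> 'b::real_vector" and x :: "'i \<Rightarrow> 'a"
  assumes "finite I" and linear: "\<And>i. i \<in> I \<Longrightarrow> linear (f i)"
    and off: "\<And>i j. i \<in> I \<Longrightarrow> j \<in> I \<Longrightarrow> i \<noteq> j \<Longrightarrow> f i (x j) = 0"
    and diag: "\<And>j. j \<in> I \<Longrightarrow> f j (x j) \<noteq> 0"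
  shows "card I \<le> DIM('a)"
proof -
  have "inj_on x I" using off diag by (metis inj_onI)
  moreover have "independent (x ` I)"
  proof
    assume "dependent (x ` I)"
    then obtain u where u: "(\<Sum>w\<in>x ` I. u w *\<^sub>R w) = 0" and "\<exists>w\<in>x ` I. u w \<noteq> 0"
      using dependent_finite[of "x ` I"] assms(1) by auto
    then obtain k where k: "k \<in> I" "u (x k) \<noteq> 0" by auto
    have "0 = f k (\<Sum>w\<in>x ` I. u w *\<^sub>R w)" using u linear[OF k(1)] by (simp add: linear_0)
    also have "\<dots> = (\<Sum>w\<in>x ` I. u w *\<^sub>R f k w)"
      using linear[OF k(1)] by (simp add: linear_sum linear_scale)
    also have "\<dots> = (\<Sum>w\<in>{x k}. u w *\<^sub>R f k w)"
      using assms(1) k(1) off by (intro sum.mono_neutral_right) auto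
    finally show False using k diag by simp
  qed
  ultimately show ?thesis using independent_bound[of "x ` I"] card_image[of x I] by simp
qed

lemma ex_image_eq_atMost:
  assumes "finite A" and "N < card A"
  obtains g :: "'a \<Rightarrow> nat" where "g ` A = {..N}"
proof -
  obtain h where h: "bij_betw h A {0..<card A}" using ex_bij_betw_finite_nat[OF assms(1)] by blast
  have "(\<lambda>k. min (h k) N) ` A = {..N}"
  proof (intro equalityI subsetI)
    fix i assume "i \<in> {..N}"
    then have "i \<in> h ` A" using h assms(2) by (simp add: bij_betw_def)
    then show "i \<in> (\<lambda>k. min (h k) N) ` A" using \<open>i \<in> {..N}\<close> by force
  qed auto
  then show thesis by (rule that)
qed

definition PSD :: "(real^'n^'n) set" where
  "PSD = {A. transpose A = A \<and> (\<forall>x::real^'n. 0 \<le> x \<bullet> (A *v x))}"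

lemma transpose_sum: "transpose (sum B I) = (\<Sum>i\<in>I. transpose (B i :: 'a::comm_monoid_add^'n^'m))"
  by (simp add: vec_eq_iff transpose_def sum_component)

lemma matrix_vector_mult_sum_left: "sum B I *v x = (\<Sum>i\<in>I. B i *v (x :: 'a::semiring_1^'n))"
  by (simp add: vec_eq_iff matrix_vector_mult_def sum_component sum_distrib_right sum.swap[of _ I])

lemma inner_matrix_vector_mult_symmetric:
  fixes A :: "real^'n^'n"
  assumes "transpose A = A"
  shows "x \<bullet> (A *v y) = y \<bullet> (A *v x)"
proof -
  have "x \<bullet> (A *v y) = (transpose A *v x) \<bullet> y" by (simp add: dot_lmul_matrix)
  then show ?thesis using assms by (simp add: inner_commute)
qed

text \<open>Expanding the nonnegative form along \<open>x + t A x\<close> leaves only a linear and a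
quadratic term in \<open>t\<close>, so the linear coefficient \<open>\<parallel>A x\<parallel>\<^sup>2\<close> must vanish.\<close>
lemma PSD_mult_eq_0_if_quadratic_form_eq_0:
  fixes A :: "real^'n^'n"
  assumes "A \<in> PSD" and "x \<bullet> (A *v x) = 0"
  shows "A *v x = 0"
proof -
  define z where "z = A *v x"
  have sym: "transpose A = A" and nonneg: "\<And>y. 0 \<le> y \<bullet> (A *v y)"
    using assms(1) by (auto simp: PSD_def)
  have "(x + t *\<^sub>R z) \<bullet> (A *v (x + t *\<^sub>R z)) = 2 * t * (z \<bullet> z) + t\<^sup>2 * (z \<bullet> (A *v z))" for t
    using assms(2) inner_matrix_vector_mult_symmetric[OF sym, of x z]
    by (simp add: matrix_vector_right_distrib matrix_vector_mult_scaleR inner_add_left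
        inner_add_right z_def power2_eq_square algebra_simps)
  then have "0 \<le> 2 * t * (z \<bullet> z) + t\<^sup>2 * (z \<bullet> (A *v z))" for t
    using nonneg[of "x + t *\<^sub>R z"] by simp
  then have "z \<bullet> z = 0" using nonneg[of z] by (rule linear_coeff_eq_0_if_quadratic_nonneg)
  then show ?thesis by (simp add: z_def)
qed

lemma sum_mem_PSD: "(\<And>i. i \<in> I \<Longrightarrow> B i \<in> PSD) \<Longrightarrow> sum B I \<in> PSD"
  by (auto simp: PSD_def transpose_sum matrix_vector_mult_sum_left inner_sum_right
      intro!: sum.cong sum_nonneg)

lemma summand_mult_eq_0_if_sum_PSD_mult_eq_0:
  fixes B :: "'i \<Rightarrow> real^'n^'n"
  assumes "finite I" and "\<And>i. i \<in> I \<Longrightarrow> B i \<in> PSD"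
    and "sum B I *v x = 0" and "i \<in> I"
  shows "B i *v x = 0"
proof -
  have "(\<Sum>i\<in>I. x \<bullet> (B i *v x)) = 0"
    using assms(3) by (simp add: matrix_vector_mult_sum_left inner_sum_right [symmetric])
  moreover have "\<forall>i\<in>I. 0 \<le> x \<bullet> (B i *v x)" using assms(2) by (auto simp: PSD_def)
  ultimately have "x \<bullet> (B i *v x) = 0" using assms(1,4) by (simp add: sum_nonneg_eq_0_iff)
  then show ?thesis using assms(2,4) by (intro PSD_mult_eq_0_if_quadratic_form_eq_0)
qed

lemma Pos_subset_PSD: "Pos \<subseteq> PSD"
proof
  fix A :: "real^'n^'n"
  assume "A \<in> Pos"
  then have "0 \<le> x \<bullet> (A *v x)" for x by (cases "x = 0") (auto simp: Pos_def less_imp_le)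
  with \<open>A \<in> Pos\<close> show "A \<in> PSD" by (simp add: Pos_def PSD_def)
qed

lemma ex_kernel_vector_if_PSD_not_Pos:
  assumes "A \<in> PSD" and "A \<notin> Pos"
  obtains x where "x \<noteq> 0" and "A *v x = 0"
proof -
  obtain x where "x \<noteq> 0" and "x \<bullet> (A *v x) \<le> 0" using assms by (force simp: Pos_def PSD_def)
  moreover have "0 \<le> x \<bullet> (A *v x)" using assms(1) by (simp add: PSD_def)
  ultimately show thesis using assms(1) by (intro that PSD_mult_eq_0_if_quadratic_form_eq_0) auto
qed

lemma closed_PSD: "closed (PSD :: (real^'n^'n) set)"
proof -
  have symmetric: "closed {A::real^'n^'n. transpose A = A}"
    unfolding transpose_def by (intro closed_Collect_eq continuous_intros)
  have nonneg: "closed {A::real^'n^'n. 0 \<le> x \<bullet> (A *v x)}" for x :: "real^'n"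
    unfolding inner_vec_def matrix_vector_mult_def by (intro closed_Collect_le continuous_intros)
  have PSD_eq: "PSD = {A::real^'n^'n. transpose A = A} \<inter> (\<Inter>x. {A. 0 \<le> x \<bullet> (A *v x)})"
    by (auto simp: PSD_def)
  show ?thesis unfolding PSD_eq by (intro closed_Int closed_INT ballI symmetric nonneg)
qed

lemma PSD_subset_closure_Pos: "PSD \<subseteq> closure (Pos :: (real^'n^'n) set)"
proof
  fix A :: "real^'n^'n"
  assume A: "A \<in> PSD"
  define f where "f k = A + inverse (real (Suc k)) *\<^sub>R mat 1" for k
  have "f k \<in> Pos" for k
  proof -
    have "0 < x \<bullet> (f k *v x)" if "x \<noteq> 0" for x
    proof -
      have "x \<bullet> (f k *v x) = x \<bullet> (A *v x) + inverse (real (Suc k)) * (x \<bullet> x)"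
        by (simp add: f_def matrix_vector_mult_add_rdistrib inner_add_right
            flip: scaleR_matrix_vector_assoc)
      then show ?thesis using A that by (simp add: PSD_def add_nonneg_pos)
    qed
    moreover have "transpose (f k) = f k"
      using A by (simp add: f_def PSD_def transpose_scalar vec_eq_iff transpose_def mat_def)
    ultimately show ?thesis by (simp add: Pos_def)
  qed
  moreover have "f \<longlonglongrightarrow> A + 0 *\<^sub>R mat 1"
    unfolding f_def by (intro tendsto_intros LIMSEQ_inverse_real_of_nat)
  ultimately show "A \<in> closure Pos" unfolding closure_sequential by auto
qed

lemma closure_Pos_eq_PSD: "closure Pos = PSD"
  using PSD_subset_closure_Pos closure_minimal[OF Pos_subset_PSD closed_PSD] by blast

lemma cone_rank_prop_Pos:
  assumes "CARD('n) \<le> N"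
  shows "cone_rank_prop (Pos :: (real^'n^'n) set) N"
  unfolding cone_rank_prop_def
proof (intro allI impI)
  fix v :: "nat \<Rightarrow> real^'n^'n"
  assume "\<forall>i\<le>N. v i \<in> closure Pos - {0}" and sum_Pos: "(\<Sum>i\<le>N. v i) \<in> Pos"
  then have v_PSD: "v i \<in> PSD" if "i \<le> N" for i using that closure_Pos_eq_PSD by blast
  show "\<exists>j\<le>N. (\<Sum>i\<in>{..N} - {j}. v i) \<in> Pos"
  proof (rule ccontr)
    assume no_Pos: "\<not> ?thesis"
    have "\<exists>x. x \<noteq> 0 \<and> (\<Sum>i\<in>{..N} - {j}. v i) *v x = 0" if "j \<le> N" for j
    proof -
      have "(\<Sum>i\<in>{..N} - {j}. v i) \<in> PSD" using v_PSD by (intro sum_mem_PSD) auto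
      moreover have "(\<Sum>i\<in>{..N} - {j}. v i) \<notin> Pos" using no_Pos that by blast
      ultimately show ?thesis by (blast elim: ex_kernel_vector_if_PSD_not_Pos)
    qed
    then obtain x where x: "\<And>j. j \<le> N \<Longrightarrow> x j \<noteq> 0 \<and> (\<Sum>i\<in>{..N} - {j}. v i) *v x j = 0"
      by metis
    have off: "v i *v x j = 0" if "i \<le> N" "j \<le> N" "i \<noteq> j" for i j
      using that x v_PSD by (intro summand_mult_eq_0_if_sum_PSD_mult_eq_0[of "{..N} - {j}" v]) auto
    have diag: "v j *v x j \<noteq> 0" if "j \<le> N" for j
    proof
      assume "v j *v x j = 0"
      then have "(\<Sum>i\<le>N. v i) *v x j = 0"
        using that x by (simp add: sum.remove[of "{..N}" j] matrix_vector_mult_add_rdistrib)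
      then have "x j \<bullet> ((\<Sum>i\<le>N. v i) *v x j) = 0" by simp
      then show False using sum_Pos x that by (force simp: Pos_def)
    qed
    have "card {..N} \<le> DIM(real^'n)"
      using off diag by (intro card_le_DIM_if_separated_by_linear_maps[of _ "\<lambda>i. (*v) (v i)" x]) auto
    then show False using assms by simp
  qed
qed

definition diag_mat :: "('n \<Rightarrow> real) \<Rightarrow> real^'n^'n" where
  "diag_mat d = (\<chi> i j. if i = j then d i else 0)"

lemma diag_mat_mult_vector: "diag_mat d *v x = (\<chi> i. d i * x $ i)"
  by (simp add: vec_eq_iff diag_mat_def matrix_vector_mult_def if_distrib[where f = "\<lambda>a. a * _"]
      cong: if_cong)

lemma inner_diag_mat: "x \<bullet> (diag_mat d *v x) = (\<Sum>i\<in>UNIV. d i * (x $ i)\<^sup>2)"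
  by (simp add: diag_mat_mult_vector inner_vec_def power2_eq_square mult.left_commute)

lemma sum_diag_mat: "(\<Sum>i\<in>I. diag_mat (f i)) = diag_mat (\<lambda>k. \<Sum>i\<in>I. f i k)"
  by (simp add: vec_eq_iff diag_mat_def sum_component if_distrib cong: if_cong)

lemma transpose_diag_mat: "transpose (diag_mat d) = diag_mat d"
  by (auto simp: vec_eq_iff transpose_def diag_mat_def)

lemma diag_mat_mem_PSD: "(\<And>k. 0 \<le> d k) \<Longrightarrow> diag_mat d \<in> PSD"
  by (simp add: PSD_def transpose_diag_mat inner_diag_mat sum_nonneg)

lemma diag_mat_mem_Pos_iff: "diag_mat d \<in> Pos \<longleftrightarrow> (\<forall>k. 0 < d k)"
proof
  assume "diag_mat d \<in> Pos"
  then have "0 < axis k 1 \<bullet> (diag_mat d *v axis k 1)" for k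
    unfolding Pos_def by (simp add: axis_eq_0_iff)
  moreover have "diag_mat d *v axis k 1 = d k *\<^sub>R axis k 1" for k
    by (simp add: diag_mat_mult_vector vec_eq_iff axis_def)
  ultimately show "\<forall>k. 0 < d k" by (simp add: inner_axis_axis)
next
  assume d: "\<forall>k. 0 < d k"
  have "0 < x \<bullet> (diag_mat d *v x)" if "x \<noteq> 0" for x
  proof -
    obtain k where "x $ k \<noteq> 0" using \<open>x \<noteq> 0\<close> by (auto simp: vec_eq_iff)
    then have "0 < d k * (x $ k)\<^sup>2" using d by simp
    moreover have "0 \<le> d i * (x $ i)\<^sup>2" for i
      by (metis d less_imp_le mult_nonneg_nonneg zero_le_power2)
    ultimately show ?thesis unfolding inner_diag_mat by (intro sum_pos2[of _ k]) auto
  qed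
  then show "diag_mat d \<in> Pos" by (simp add: Pos_def transpose_diag_mat)
qed

lemma not_cone_rank_prop_Pos:
  assumes "N < CARD('n)"
  shows "\<not> cone_rank_prop (Pos :: (real^'n^'n) set) N"
proof -
  obtain g :: "'n \<Rightarrow> nat" where g: "range g = {..N}"
    using ex_image_eq_atMost[OF finite_class.finite_UNIV assms] by blast
  have g_le: "g k \<in> {..N}" for k using rangeI[of g k] unfolding g .
  have g_class: "\<exists>k. g k = i" if "i \<le> N" for i
  proof -
    have "i \<in> range g" using g that by simp
    then show ?thesis by blast
  qed
  define v where "v i = diag_mat (\<lambda>k. if g k = i then 1 else 0)" for i
  have sum_v: "(\<Sum>i\<in>S. v i) = diag_mat (\<lambda>k. if g k \<in> S then 1 else 0)" if "finite S" for S
    using that by (simp add: v_def sum_diag_mat)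
  have "v i \<in> closure Pos - {0}" if "i \<le> N" for i
  proof -
    from g_class[OF that] obtain k where "g k = i" ..
    then have "v i $ k $ k \<noteq> 0" by (simp add: v_def diag_mat_def)
    moreover have "v i \<in> PSD" unfolding v_def by (rule diag_mat_mem_PSD) simp
    ultimately show ?thesis by (auto simp: closure_Pos_eq_PSD)
  qed
  moreover have "(\<Sum>i\<le>N. v i) \<in> Pos"
    using g_le by (simp add: sum_v diag_mat_mem_Pos_iff)
  moreover have "(\<Sum>i\<in>{..N} - {j}. v i) \<notin> Pos" if "j \<le> N" for j
  proof -
    from g_class[OF that] obtain k where "g k = j" ..
    then have "\<not> (\<forall>k. 0 < (if g k \<in> {..N} - {j} then 1 else (0::real)))"
      by (metis Diff_iff insertI1 less_irrefl)
    then show ?thesis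
      by (simp only: sum_v finite_Diff finite_atMost diag_mat_mem_Pos_iff not_False_eq_True)
  qed
  ultimately show ?thesis unfolding cone_rank_prop_def not_all not_imp
    by (intro exI[of _ v] conjI) auto
qed

theorem propositionC2:
  shows "cone_rank (Pos :: (real^'n^'n) set) = enat CARD('n)"
proof (rule cone_rank_eqI)
  show "cone_rank_prop (Pos :: (real^'n^'n) set) N \<longleftrightarrow> CARD('n) \<le> N" for N
    using cone_rank_prop_Pos not_cone_rank_prop_Pos not_le by blast
qed simp

end
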